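(* Let $M$ be an ordinal monoid with merge. For every $a\in M$ there exists an FO-approximant of $\pi$ from $a^{+}$ to $\mathrm{Cl}^{+}_{\sharp}(\{a\})$, where $a^{+}\subseteq M^{\mathrm{ord}}$ is the set of finite nonempty words all of whose letters are $a$.
   Context: Countable ordinal words over $\Sigma$: maps $w\colon\alpha\to\Sigma$, $\alpha$ a countable ordinal; $\Sigma^{\mathrm{ord}}$ their set. An ordinal monoid: set $M$ with $\pi\colon M^{\mathrm{ord}}\to M$, $\pi(x)=x$ on one-letter words, generalised associativity; $1=\pi(\varepsilon)$, $x\cdot y=\pi(xy)$, $x^\omega=\pi(xxx\cdots)$; ordered by $\le$ if $u\le v$ letterwise implies $\pi(u)\le\pi(v)$. $x^!$ idempotent power, $x^{!+k}$ eventual value of $x^{n!+k}$ in a finite semigroup. Ordinal monoid with merge: $(M,1,\le,\cdot,-^\omega,-^\sharp)$, $M$ finite, $(M,1,\le,\cdot,-^\omega)$ the presentation of an ordered finite ordinal monoid, $-^\sharp$ monotone with $a^{!+k}\le a^\sharp$, $(a^!)^\sharp=a^!$, $a^\sharp a^\sharp=(a^\sharp)^\sharp=a^\sharp$, $(ab)^\sharp=a(ba)^\sharp b$. $\mathrm{Cl}^{+}_{\sharp}(A)$ is the closure of $A$ under $\cdot$ and $-^\sharp$. FO logic over alphabet $M$ (atoms $x<y$, $a(x)$); FO-definable languages and maps (preimages FO-definable). For FO-definable $L\subseteq M^{\mathrm{ord}}$, an FO-approximant of $\pi$ over $L$ is an FO-definable $\rho\colon L\to M$ with $\pi(u)\le\rho(u)$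 for all $u\in L$; it is "from $L$ to $Y$" if its values lie in $Y\subseteq M$. *)

theory Defs
  imports Main "HOL-Library.Nat_Bijection"
begin

text \<open>A countable ordinal word over the alphabet 'm is represented by a well-order r on a
set of natural numbers (its set of positions Field r; every countable ordinal is the
order type of such a well-order) together with a labelling of positions. Labels outside
Field r are irrelevant. Words are identified up to isomorphism (see word_iso).\<close>

type_synonym 'm oword = "nat rel \<times> (nat \<Rightarrow> 'm)"

definition valid_word :: "'m oword \<Rightarrow> bool" where
  "valid_word u \<longleftrightarrow> Well_order (fst u)"

definition pos :: "'m oword \<Rightarrow> nat set" where
  "pos u = Field (fst u)"

definition word_iso :: "'m oword \<Rightarrow> 'm oword \<Rightarrow> bool" where
  "word_iso u v \<longleftrightarrow> (\<exists>f. bij_betw f (pos u) (pos v)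
      \<and> (\<forall>i\<in>pos u. \<forall>j\<in>pos u. (i, j) \<in> fst u \<longleftrightarrow> (f i, f j) \<in> fst v)
      \<and> (\<forall>i\<in>pos u. snd v (f i) = snd u i))"

definition empty_word :: "'m oword" where
  "empty_word = ({}, (\<lambda>_. undefined))"

definition letter_word :: "'m \<Rightarrow> 'm oword" where
  "letter_word x = ({(0, 0)}, (\<lambda>_. x))"

definition two_word :: "'m \<Rightarrow> 'm \<Rightarrow> 'm oword" where
  "two_word x y = ({(0, 0), (0, 1), (1, 1)}, (\<lambda>n. if n = 0 then x else y))"

definition omega_word :: "'m \<Rightarrow> 'm oword" where
  "omega_word x = ({(i, j). i \<le> j}, (\<lambda>_. x))"

text \<open>Concatenation (flattening) of an ordinal-indexed sequence of words:
positions are pairs (i, j) with i a position of the outer word and j a position of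
the i-th word, ordered lexicographically, encoded into nat via prod_encode.\<close>

definition flatten :: "nat rel \<Rightarrow> (nat \<Rightarrow> 'm oword) \<Rightarrow> 'm oword" where
  "flatten R W =
    ({(prod_encode (i, j), prod_encode (i', j')) | i j i' j'.
        i \<in> Field R \<and> i' \<in> Field R \<and> j \<in> pos (W i) \<and> j' \<in> pos (W i') \<and>
        (((i, i') \<in> R \<and> i \<noteq> i') \<or> (i = i' \<and> (j, j') \<in> fst (W i)))},
     (\<lambda>n. case prod_decode n of (i, j) \<Rightarrow> snd (W i) j))"

definition ordinal_monoid :: "('m oword \<Rightarrow> 'm) \<Rightarrow> bool" where
  "ordinal_monoid \<pi> \<longleftrightarrow>
     (\<forall>u v. valid_word u \<longrightarrow> valid_word v \<longrightarrow> word_iso u v \<longrightarrow> \<pi> u = \<pi> v) \<and>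
     (\<forall>u. valid_word u \<longrightarrow> (\<exists>n. pos u = {n}) \<longrightarrow> \<pi> u = snd u (THE n. pos u = {n})) \<and>
     (\<forall>R W. Well_order R \<longrightarrow> (\<forall>i\<in>Field R. valid_word (W i)) \<longrightarrow>
        \<pi> (flatten R W) = \<pi> (R, (\<lambda>i. \<pi> (W i))))"

definition ordered_ordinal_monoid :: "('m::order oword \<Rightarrow> 'm) \<Rightarrow> bool" where
  "ordered_ordinal_monoid \<pi> \<longleftrightarrow> ordinal_monoid \<pi> \<and>
     (\<forall>r w w'. Well_order r \<longrightarrow> (\<forall>i\<in>Field r. w i \<le> w' i) \<longrightarrow> \<pi> (r, w) \<le> \<pi> (r, w'))"

definition presentation_of ::
  "('m oword \<Rightarrow> 'm) \<Rightarrow> 'm \<Rightarrow> ('m \<Rightarrow> 'm \<Rightarrow> 'm) \<Rightarrow> ('m \<Rightarrow> 'm) \<Rightarrow> bool" where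
  "presentation_of \<pi> one mult omega \<longleftrightarrow>
     one = \<pi> empty_word \<and>
     (\<forall>x y. mult x y = \<pi> (two_word x y)) \<and>
     (\<forall>x. omega x = \<pi> (omega_word x))"

primrec mpow :: "'m \<Rightarrow> ('m \<Rightarrow> 'm \<Rightarrow> 'm) \<Rightarrow> 'm \<Rightarrow> nat \<Rightarrow> 'm" where
  "mpow one mult x 0 = one"
| "mpow one mult x (Suc n) = mult x (mpow one mult x n)"

text \<open>x^{!+k}: the eventual value of x^{n!+k}; x^! is x^{!+0}.\<close>

definition fact_pow :: "'m \<Rightarrow> ('m \<Rightarrow> 'm \<Rightarrow> 'm) \<Rightarrow> 'm \<Rightarrow> nat \<Rightarrow> 'm" where
  "fact_pow one mult x k = (THE y. \<exists>N. \<forall>n\<ge>N. mpow one mult x (fact n + k) = y)"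

definition ordinal_monoid_with_merge ::
  "('m::{finite,order} oword \<Rightarrow> 'm) \<Rightarrow> 'm \<Rightarrow> ('m \<Rightarrow> 'm \<Rightarrow> 'm) \<Rightarrow> ('m \<Rightarrow> 'm)
     \<Rightarrow> ('m \<Rightarrow> 'm) \<Rightarrow> bool" where
  "ordinal_monoid_with_merge \<pi> one mult omega sharp \<longleftrightarrow>
     ordered_ordinal_monoid \<pi> \<and> presentation_of \<pi> one mult omega \<and>
     mono sharp \<and>
     (\<forall>a k. fact_pow one mult a k \<le> sharp a) \<and>
     (\<forall>a. sharp (fact_pow one mult a 0) = fact_pow one mult a 0) \<and>
     (\<forall>a. mult (sharp a) (sharp a) = sharp a \<and> sharp (sharp a) = sharp a) \<and>
     (\<forall>a b. sharp (mult a b) = mult a (mult (sharp (mult b a)) b))"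

inductive_set cl_sharp :: "('m \<Rightarrow> 'm \<Rightarrow> 'm) \<Rightarrow> ('m \<Rightarrow> 'm) \<Rightarrow> 'm set \<Rightarrow> 'm set"
  for mult sharp A where
  base: "x \<in> A \<Longrightarrow> x \<in> cl_sharp mult sharp A"
| mult: "x \<in> cl_sharp mult sharp A \<Longrightarrow> y \<in> cl_sharp mult sharp A \<Longrightarrow>
           mult x y \<in> cl_sharp mult sharp A"
| sharp: "x \<in> cl_sharp mult sharp A \<Longrightarrow> sharp x \<in> cl_sharp mult sharp A"

datatype 'm fo =
    FLess nat nat
  | FLetter 'm nat
  | FNot "'m fo"
  | FAnd "'m fo" "'m fo"
  | FEx nat "'m fo"

primrec fv :: "'m fo \<Rightarrow> nat set" where
  "fv (FLess x y) = {x, y}"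
| "fv (FLetter a x) = {x}"
| "fv (FNot \<phi>) = fv \<phi>"
| "fv (FAnd \<phi> \<psi>) = fv \<phi> \<union> fv \<psi>"
| "fv (FEx x \<phi>) = fv \<phi> - {x}"

primrec sat :: "'m oword \<Rightarrow> (nat \<Rightarrow> nat) \<Rightarrow> 'm fo \<Rightarrow> bool" where
  "sat u \<sigma> (FLess x y) \<longleftrightarrow> (\<sigma> x, \<sigma> y) \<in> fst u \<and> \<sigma> x \<noteq> \<sigma> y"
| "sat u \<sigma> (FLetter a x) \<longleftrightarrow> snd u (\<sigma> x) = a"
| "sat u \<sigma> (FNot \<phi>) \<longleftrightarrow> \<not> sat u \<sigma> \<phi>"
| "sat u \<sigma> (FAnd \<phi> \<psi>) \<longleftrightarrow> sat u \<sigma> \<phi> \<and> sat u \<sigma> \<psi>"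
| "sat u \<sigma> (FEx x \<phi>) \<longleftrightarrow> (\<exists>p\<in>pos u. sat u (\<sigma>(x := p)) \<phi>)"

definition fo_definable :: "'m oword set \<Rightarrow> bool" where
  "fo_definable L \<longleftrightarrow> (\<exists>\<phi>. fv \<phi> = {} \<and>
     (\<forall>u. valid_word u \<longrightarrow> (u \<in> L \<longleftrightarrow> sat u (\<lambda>_. 0) \<phi>)))"

definition fo_definable_map :: "'m oword set \<Rightarrow> ('m oword \<Rightarrow> 'b) \<Rightarrow> bool" where
  "fo_definable_map L \<rho> \<longleftrightarrow> (\<forall>b. fo_definable {u \<in> L. \<rho> u = b})"

definition fo_approximant_to ::
  "('m::order oword \<Rightarrow> 'm) \<Rightarrow> 'm oword set \<Rightarrow> 'm set \<Rightarrow> ('m oword \<Rightarrow> 'm) \<Rightarrow> bool" where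
  "fo_approximant_to \<pi> L Y \<rho> \<longleftrightarrow> fo_definable L \<and> fo_definable_map L \<rho> \<and>
     (\<forall>u\<in>L. \<pi> u \<le> \<rho> u \<and> \<rho> u \<in> Y)"

definition plus_lang :: "'m \<Rightarrow> 'm oword set" where
  "plus_lang a = {u. valid_word u \<and> finite (pos u) \<and> pos u \<noteq> {} \<and> (\<forall>i\<in>pos u. snd u i = a)}"

end

theory Submission
  imports Defs
begin

text \<open>On a word u of a+ the product is a^|u|. The powers of a in the finite monoid are
eventually periodic, so from some threshold i on a^n coincides with a^(!+n), which the merge
axioms bound by a\<sharp>. Hence \<rho>(u) = a^|u| for |u| < i and \<rho>(u) = a\<sharp> otherwise is an approximant
with values in the closure of {a} under product and merge. It depends only on min(|u|, i),
and first-order logic counts positions up to a fixed bound. It also defines a+ itself: a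
well-ordered word is finite and nonempty iff it has a last position and every non-first
position has an immediate predecessor.\<close>

section \<open>Finite well-orders\<close>

lemma Linear_order_notin_underS:
  assumes "Linear_order r" "x \<in> Field r" "y \<in> Field r" "x \<notin> underS r y"
  shows "(y, x) \<in> r"
  using assms Linear_order_in_diff_Id[of r y x] by (auto simp: underS_def)

lemma Linear_order_finite_has_max:
  assumes lin: "Linear_order r" and S: "finite S" "S \<noteq> {}" "S \<subseteq> Field r"
  shows "\<exists>m\<in>S. \<forall>s\<in>S. (s, m) \<in> r"
  using S
proof (induction S rule: finite_ne_induct)
  case (singleton x)
  then have "(x, x) \<in> r" using Linear_order_notin_underS[OF lin _ _ underS_notIn] by simp
  then show ?case by simp
next
  case (insert x S)
  then obtain m where m: "m \<in> S" "\<forall>s\<in>S. (s, m) \<in> r" by auto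
  have x: "x \<in> Field r" and "m \<in> Field r" using insert m by auto
  then consider "(x, m) \<in> r" | "(m, x) \<in> r"
    using Linear_order_notin_underS[OF lin] by (auto simp: underS_def)
  then show ?case
  proof cases
    case 1
    then show ?thesis using m by auto
  next
    case 2
    have "trans r" using lin by (simp add: order_on_defs)
    then have "\<forall>s\<in>S. (s, x) \<in> r" using 2 m(2) by (meson transD)
    moreover have "(x, x) \<in> r" using Linear_order_notin_underS[OF lin x x underS_notIn] .
    ultimately show ?thesis by blast
  qed
qed

lemma max_notin_underS:
  assumes "antisym r" "m \<in> S" "\<forall>s\<in>S. (s, m) \<in> r" "y \<in> S"
  shows "m \<notin> underS r y"
  using assms by (auto simp: underS_def dest: antisymD)

lemma Suc_le_card_iff_underS:
  assumes lin: "Linear_order r" and S: "finite S" "S \<subseteq> Field r"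
    and down: "\<And>p. p \<in> S \<Longrightarrow> underS r p \<subseteq> S"
  shows "Suc k \<le> card S \<longleftrightarrow> (\<exists>p\<in>S. k \<le> card (underS r p))"
proof
  assume k: "Suc k \<le> card S"
  then have "S \<noteq> {}" by auto
  then obtain p where p: "p \<in> S" "\<forall>s\<in>S. (s, p) \<in> r"
    using Linear_order_finite_has_max[OF lin S(1) _ S(2)] by blast
  have "S - {p} \<subseteq> underS r p" using p(2) by (auto simp: underS_def)
  then have "card (S - {p}) \<le> card (underS r p)"
    by (rule card_mono[OF finite_subset[OF down[OF p(1)] S(1)]])
  then have "k \<le> card (underS r p)" using k p(1) S(1) by simp
  then show "\<exists>p\<in>S. k \<le> card (underS r p)" using p(1) by blast
next
  assume "\<exists>p\<in>S. k \<le> card (underS r p)"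
  then obtain p where p: "p \<in> S" "k \<le> card (underS r p)" by blast
  have "insert p (underS r p) \<subseteq> S" using p(1) down by auto
  then have "card (insert p (underS r p)) \<le> card S" by (rule card_mono[OF S(1)])
  then show "Suc k \<le> card S"
    using p finite_subset[OF down[OF p(1)] S(1)] by (simp add: underS_notIn)
qed

lemma Well_order_finite_iff_max_pred:
  assumes wo: "Well_order r"
  shows "finite (Field r) \<and> Field r \<noteq> {} \<longleftrightarrow>
     (\<exists>m\<in>Field r. \<forall>y\<in>Field r. m \<notin> underS r y) \<and>
     (\<forall>y\<in>Field r. underS r y \<noteq> {} \<longrightarrow> (\<exists>z\<in>underS r y. \<forall>w\<in>underS r y. z \<notin> underS r w))"
    (is "_ \<longleftrightarrow> ?max \<and> ?pred")
proof
  have lin: "Linear_order r" and antisym: "antisym r" using wo by (simp_all add: order_on_defs)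
  assume fin: "finite (Field r) \<and> Field r \<noteq> {}"
  then obtain m where "m \<in> Field r" "\<forall>s\<in>Field r. (s, m) \<in> r"
    using Linear_order_finite_has_max[OF lin] by blast
  then have ?max using max_notin_underS[OF antisym] by blast
  moreover have ?pred
  proof (intro ballI impI)
    fix y assume "y \<in> Field r" "underS r y \<noteq> {}"
    moreover have "finite (underS r y)"
      by (rule finite_subset[OF Order_Relation.underS_Field conjunct1[OF fin]])
    ultimately obtain z where "z \<in> underS r y" "\<forall>w\<in>underS r y. (w, z) \<in> r"
      using Linear_order_finite_has_max[OF lin _ _ Order_Relation.underS_Field] by blast
    then show "\<exists>z\<in>underS r y. \<forall>w\<in>underS r y. z \<notin> underS r w"
      using max_notin_underS[OF antisym] by blast
  qed
  ultimately show "?max \<and> ?pred" ..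
next
  have lin: "Linear_order r" and wf: "wf (r - Id)" using wo by (simp_all add: order_on_defs)
  assume max_pred: "?max \<and> ?pred"
  have "finite (underS r x)" if "x \<in> Field r" for x
    using that
  proof (induction x rule: wf_induct_rule[OF wf])
    case (1 x)
    show ?case
    proof (cases "underS r x = {}")
      case False
      with max_pred "1.prems" obtain z
        where z: "z \<in> underS r x" "\<forall>w\<in>underS r x. z \<notin> underS r w" by blast
      have zF: "z \<in> Field r" by (rule subsetD[OF Order_Relation.underS_Field z(1)])
      have "underS r x \<subseteq> insert z (underS r z)"
      proof
        fix w assume w: "w \<in> underS r x"
        have "w \<in> Field r" by (rule subsetD[OF Order_Relation.underS_Field w])
        then have "(w, z) \<in> r"
          using Linear_order_notin_underS[OF lin zF _ z(2)[rule_format, OF w]] by simp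
        then show "w \<in> insert z (underS r z)" by (auto simp: underS_def)
      qed
      moreover have "(z, x) \<in> r - Id" using z(1) by (auto simp: underS_def)
      then have "finite (underS r z)" using "1.IH" zF by blast
      ultimately show ?thesis by (simp add: finite_subset)
    qed simp
  qed
  moreover obtain m where m: "m \<in> Field r" "\<forall>y\<in>Field r. m \<notin> underS r y"
    using max_pred by blast
  moreover have "Field r \<subseteq> insert m (underS r m)"
  proof
    fix y assume "y \<in> Field r"
    then have "(y, m) \<in> r" using Linear_order_notin_underS[OF lin m(1)] m(2) by blast
    then show "y \<in> insert m (underS r m)" by (auto simp: underS_def)
  qed
  ultimately have "finite (Field r)" using finite_subset by blast
  then show "finite (Field r) \<and> Field r \<noteq> {}" using m(1) by blast
qed

section \<open>First-order formulas counting positions\<close>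

lemma sat_FLess: "sat u \<sigma> (FLess x y) \<longleftrightarrow> \<sigma> x \<in> underS (fst u) (\<sigma> y)"
  by (auto simp: underS_def)

lemma underS_subset_pos: "underS (fst u) x \<subseteq> pos u"
  unfolding pos_def by (rule Order_Relation.underS_Field)

text \<open>The chain of witnesses below the position of variable k reuses the variables
k - 1, ..., 0.\<close>

fun fo_below_at_least :: "nat \<Rightarrow> 'm fo" where
  "fo_below_at_least 0 = FNot (FLess 0 0)"
| "fo_below_at_least (Suc k) = FEx k (FAnd (FLess k (Suc k)) (fo_below_at_least k))"

lemma fv_fo_below_at_least: "fv (fo_below_at_least k) = {k}"
  by (induction k) auto

lemma sat_fo_below_at_least:
  assumes lin: "Linear_order (fst u)" and fin: "finite (pos u)" and x: "\<sigma> k \<in> pos u"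
  shows "sat u \<sigma> (fo_below_at_least k) \<longleftrightarrow> k \<le> card (underS (fst u) (\<sigma> k))"
  using x
proof (induction k arbitrary: \<sigma>)
  case (Suc k)
  let ?x = "\<sigma> (Suc k)"
  have "sat u \<sigma> (fo_below_at_least (Suc k)) \<longleftrightarrow>
      (\<exists>p\<in>underS (fst u) ?x. k \<le> card (underS (fst u) p))"
    using Suc.IH underS_subset_pos[of u] by (auto simp: sat_FLess simp del: sat.simps(1))
  also have "\<dots> \<longleftrightarrow> Suc k \<le> card (underS (fst u) ?x)"
  proof (rule Suc_le_card_iff_underS[symmetric, OF lin])
    show "finite (underS (fst u) ?x)"
      using fin underS_subset_pos[of u] by (rule finite_subset[rotated])
    show "underS (fst u) ?x \<subseteq> Field (fst u)" by (rule Order_Relation.underS_Field)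
    show "underS (fst u) p \<subseteq> underS (fst u) ?x" if "p \<in> underS (fst u) ?x" for p
      using lin that by (intro underS_incr) (auto simp: order_on_defs underS_def)
  qed
  finally show ?case .
qed simp

definition fo_false :: "'m fo" where
  "fo_false = FEx 0 (FLess 0 0)"

definition fo_or :: "'m fo \<Rightarrow> 'm fo \<Rightarrow> 'm fo" where
  "fo_or \<phi> \<psi> = FNot (FAnd (FNot \<phi>) (FNot \<psi>))"

definition fo_disj :: "'m fo list \<Rightarrow> 'm fo" where
  "fo_disj \<phi>s = foldr fo_or \<phi>s fo_false"

lemma fv_fo_disj: "(\<And>\<phi>. \<phi> \<in> set \<phi>s \<Longrightarrow> fv \<phi> = {}) \<Longrightarrow> fv (fo_disj \<phi>s) = {}"
  by (induction \<phi>s) (auto simp: fo_disj_def fo_or_def fo_false_def)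

lemma sat_fo_disj: "sat u \<sigma> (fo_disj \<phi>s) \<longleftrightarrow> (\<exists>\<phi>\<in>set \<phi>s. sat u \<sigma> \<phi>)"
  by (induction \<phi>s) (auto simp: fo_disj_def fo_or_def fo_false_def)

fun fo_card_ge :: "nat \<Rightarrow> 'm fo" where
  "fo_card_ge 0 = FNot fo_false"
| "fo_card_ge (Suc k) = FEx k (fo_below_at_least k)"

lemma fv_fo_card_ge: "fv (fo_card_ge k) = {}"
  by (cases k) (simp_all add: fo_false_def fv_fo_below_at_least)

lemma sat_fo_card_ge:
  assumes lin: "Linear_order (fst u)" and fin: "finite (pos u)"
  shows "sat u \<sigma> (fo_card_ge k) \<longleftrightarrow> k \<le> card (pos u)"
proof (cases k)
  case (Suc j)
  have "sat u \<sigma> (fo_card_ge k) \<longleftrightarrow> (\<exists>p\<in>pos u. j \<le> card (underS (fst u) p))"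
    using sat_fo_below_at_least[OF lin fin] by (simp add: Suc)
  also have "\<dots> \<longleftrightarrow> k \<le> card (pos u)"
    unfolding Suc pos_def
    by (rule Suc_le_card_iff_underS[symmetric, OF lin fin[unfolded pos_def] subset_refl
          Order_Relation.underS_Field])
  finally show ?thesis .
qed (simp add: fo_false_def)

definition fo_card_min :: "nat \<Rightarrow> nat \<Rightarrow> 'm fo" where
  "fo_card_min N c =
     (if c < N then FAnd (fo_card_ge c) (FNot (fo_card_ge (Suc c))) else fo_card_ge N)"

lemma fv_fo_card_min: "fv (fo_card_min N c) = {}"
  by (simp add: fo_card_min_def fv_fo_card_ge del: fo_card_ge.simps)

lemma sat_fo_card_min:
  assumes "Linear_order (fst u)" "finite (pos u)" "c \<le> N"
  shows "sat u \<sigma> (fo_card_min N c) \<longleftrightarrow> min (card (pos u)) N = c"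
  using assms by (auto simp: fo_card_min_def sat_fo_card_ge simp del: fo_card_ge.simps)

lemma fo_definable_map_min_card:
  fixes g :: "nat \<Rightarrow> 'b"
  assumes L: "fo_definable L" and fin: "\<And>u. u \<in> L \<Longrightarrow> finite (pos u)"
    and \<rho>: "\<And>u. u \<in> L \<Longrightarrow> \<rho> u = g (min (card (pos u)) N)"
  shows "fo_definable_map L \<rho>"
  unfolding fo_definable_map_def
proof
  fix b
  obtain \<phi> where \<phi>: "fv \<phi> = {}" "\<And>u. valid_word u \<Longrightarrow> u \<in> L \<longleftrightarrow> sat u (\<lambda>_. 0) \<phi>"
    using L unfolding fo_definable_def by blast
  define \<psi> where
    "\<psi> = FAnd \<phi> (fo_disj (map (fo_card_min N) (filter (\<lambda>c. g c = b) [0..<Suc N])))"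
  have "fv \<psi> = {}"
    unfolding \<psi>_def using \<phi>(1) by (auto intro!: fv_fo_disj simp: fv_fo_card_min)
  moreover have "u \<in> {u \<in> L. \<rho> u = b} \<longleftrightarrow> sat u (\<lambda>_. 0) \<psi>" if v: "valid_word u" for u
  proof (cases "u \<in> L")
    case True
    have lin: "Linear_order (fst u)" using v by (simp add: valid_word_def order_on_defs)
    have "sat u (\<lambda>_. 0) (fo_disj (map (fo_card_min N) (filter (\<lambda>c. g c = b) [0..<Suc N])))
        \<longleftrightarrow> (\<exists>c\<le>N. g c = b \<and> min (card (pos u)) N = c)"
      using sat_fo_card_min[OF lin fin[OF True]]
      by (auto simp: sat_fo_disj less_Suc_eq_le simp del: upt_Suc)
    also have "\<dots> \<longleftrightarrow> g (min (card (pos u)) N) = b" by auto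
    finally show ?thesis using True \<phi>(2)[OF v] \<rho>[OF True] by (simp add: \<psi>_def del: upt_Suc)
  qed (simp add: \<psi>_def \<phi>(2)[OF v])
  ultimately show "fo_definable {u \<in> L. \<rho> u = b}"
    unfolding fo_definable_def by blast
qed

text \<open>A last position, an immediate predecessor of every non-first position, and only the
letter a; the first two conjuncts express finiteness (Well_order_finite_iff_max_pred).\<close>

definition fo_plus :: "'m \<Rightarrow> 'm fo" where
  "fo_plus a = FAnd (FEx 0 (FNot (FEx 1 (FLess 0 1))))
     (FAnd (FNot (FEx 0 (FAnd (FEx 1 (FLess 1 0))
              (FNot (FEx 1 (FAnd (FLess 1 0) (FNot (FEx 2 (FAnd (FLess 1 2) (FLess 2 0))))))))))
           (FNot (FEx 0 (FNot (FLetter a 0)))))"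

lemma sat_fo_plus:
  assumes v: "valid_word u"
  shows "sat u \<sigma> (fo_plus a) \<longleftrightarrow> u \<in> plus_lang a"
proof -
  let ?U = "underS (fst u)"
  have wo: "Well_order (fst u)" using v by (simp add: valid_word_def)
  have pred: "(\<forall>p\<in>pos u. (\<forall>q\<in>pos u. q \<notin> ?U p) \<or>
        (\<exists>q\<in>pos u. q \<in> ?U p \<and> (\<forall>w\<in>pos u. q \<in> ?U w \<longrightarrow> w \<notin> ?U p)))
      \<longleftrightarrow> (\<forall>y\<in>pos u. ?U y \<noteq> {} \<longrightarrow> (\<exists>z\<in>?U y. \<forall>w\<in>?U y. z \<notin> ?U w))"
    using underS_subset_pos[of u] by blast
  have "sat u \<sigma> (fo_plus a) \<longleftrightarrow>
     (\<exists>m\<in>pos u. \<forall>y\<in>pos u. m \<notin> ?U y) \<and>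
     (\<forall>y\<in>pos u. ?U y \<noteq> {} \<longrightarrow> (\<exists>z\<in>?U y. \<forall>w\<in>?U y. z \<notin> ?U w)) \<and>
     (\<forall>x\<in>pos u. snd u x = a)"
    unfolding fo_plus_def using pred by (simp add: sat_FLess del: sat.simps(1))
  also have "\<dots> \<longleftrightarrow> u \<in> plus_lang a"
    using Well_order_finite_iff_max_pred[OF wo, folded pos_def] v
    unfolding plus_lang_def mem_Collect_eq by blast
  finally show ?thesis .
qed

lemma fv_fo_plus: "fv (fo_plus a) = {}"
  by (simp add: fo_plus_def insert_Diff_if)

lemma fo_definable_plus_lang: "fo_definable (plus_lang a)"
  unfolding fo_definable_def by (intro exI[of _ "fo_plus a"]) (simp add: fv_fo_plus sat_fo_plus)

definition two_order :: "nat rel" where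
  "two_order = {(0, 0), (0, 1), (1, 1)}"

lemma Field_two_order: "Field two_order = {0, 1}"
  by (auto simp: two_order_def Field_def)

lemma Well_order_two_order: "Well_order two_order"
proof -
  have "two_order - Id = {(0, 1)}" by (auto simp: two_order_def)
  moreover have "wf {(0::nat, 1::nat)}" by (rule wf_subset[OF wf_less]) auto
  ultimately show ?thesis unfolding order_on_defs Field_two_order
    by (auto simp: two_order_def refl_on_def trans_def antisym_def total_on_def Field_def)
qed

lemma fst_two_word: "fst (two_word x y) = two_order"
  by (simp add: two_word_def two_order_def)

lemma valid_letter_word: "valid_word (letter_word x)"
  unfolding valid_word_def letter_word_def order_on_defs
  by (auto simp: Field_def refl_on_def trans_def antisym_def total_on_def)

lemma pos_letter_word: "pos (letter_word x) = {0}"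
  by (auto simp: pos_def letter_word_def Field_def)

lemma word_iso_same_order:
  "fst u = fst v \<Longrightarrow> (\<forall>i\<in>pos u. snd u i = snd v i) \<Longrightarrow> word_iso u v"
  unfolding word_iso_def by (rule exI[of _ id]) (auto simp: pos_def)

lemma valid_word_Restr: "valid_word u \<Longrightarrow> valid_word (Restr (fst u) A, snd u)"
  by (simp add: valid_word_def Well_order_Restr)

lemma pos_Restr:
  "valid_word u \<Longrightarrow> A \<subseteq> pos u \<Longrightarrow> pos (Restr (fst u) A, snd u) = A"
  unfolding valid_word_def pos_def by (simp add: Refl_Field_Restr2 order_on_defs)

lemma flatten_rel:
  "(prod_encode (i, j), prod_encode (i', j')) \<in> fst (flatten R W) \<longleftrightarrow>
     i \<in> Field R \<and> i' \<in> Field R \<and> j \<in> pos (W i) \<and> j' \<in> pos (W i') \<and>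
     ((i, i') \<in> R \<and> i \<noteq> i' \<or> i = i' \<and> (j, j') \<in> fst (W i))"
  unfolding flatten_def by (auto dest: inj_onD[OF inj_prod_encode, simplified])

lemma snd_flatten: "snd (flatten R W) (prod_encode (i, j)) = snd (W i) j"
  by (simp add: flatten_def)

lemma pos_flatten:
  assumes "\<forall>i\<in>Field R. valid_word (W i)"
  shows "pos (flatten R W) = {prod_encode (i, j) | i j. i \<in> Field R \<and> j \<in> pos (W i)}"
proof
  show "pos (flatten R W) \<subseteq> {prod_encode (i, j) | i j. i \<in> Field R \<and> j \<in> pos (W i)}"
  proof
    fix x assume "x \<in> pos (flatten R W)"
    then obtain y where "(x, y) \<in> fst (flatten R W) \<or> (y, x) \<in> fst (flatten R W)"
      unfolding pos_def Field_def by blast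
    then show "x \<in> {prod_encode (i, j) | i j. i \<in> Field R \<and> j \<in> pos (W i)}"
      unfolding flatten_def by auto
  qed
next
  show "{prod_encode (i, j) | i j. i \<in> Field R \<and> j \<in> pos (W i)} \<subseteq> pos (flatten R W)"
  proof clarify
    fix i j assume ij: "i \<in> Field R" "j \<in> pos (W i)"
    have "Refl (fst (W i))" using assms ij by (simp add: valid_word_def order_on_defs)
    then have "(j, j) \<in> fst (W i)" using ij by (auto simp: pos_def refl_on_def)
    then have "(prod_encode (i, j), prod_encode (i, j)) \<in> fst (flatten R W)"
      using ij by (simp add: flatten_rel)
    then show "prod_encode (i, j) \<in> pos (flatten R W)" by (auto simp: pos_def Field_def)
  qed
qed

lemma valid_word_iso:
  assumes v: "valid_word u" and iso: "word_iso u v"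
  shows "valid_word v"
proof -
  obtain f where f: "bij_betw f (pos u) (pos v)"
    "\<forall>i\<in>pos u. \<forall>j\<in>pos u. (i, j) \<in> fst u \<longleftrightarrow> (f i, f j) \<in> fst v"
    using iso unfolding word_iso_def by blast
  have "fst v = dir_image (fst u) f"
  proof
    show "fst v \<subseteq> dir_image (fst u) f"
    proof clarify
      fix x y assume xy: "(x, y) \<in> fst v"
      then have "x \<in> pos v" "y \<in> pos v" by (auto simp: pos_def Field_def)
      then obtain i j where "i \<in> pos u" "j \<in> pos u" "x = f i" "y = f j"
        using f(1) unfolding bij_betw_def by blast
      then show "(x, y) \<in> dir_image (fst u) f" using xy f(2) unfolding dir_image_def by blast
    qed
  next
    show "dir_image (fst u) f \<subseteq> fst v"
    proof clarify
      fix x y assume "(x, y) \<in> dir_image (fst u) f"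
      then obtain i j where "(i, j) \<in> fst u" "x = f i" "y = f j" unfolding dir_image_def by blast
      moreover then have "i \<in> pos u" "j \<in> pos u" by (auto simp: pos_def Field_def)
      ultimately show "(x, y) \<in> fst v" using f(2) by blast
    qed
  qed
  moreover have "inj_on f (Field (fst u))" using f(1) by (simp add: bij_betw_def pos_def)
  ultimately show ?thesis using v Well_order_dir_image unfolding valid_word_def by metis
qed

lemma word_iso_split_first:
  assumes v: "valid_word u" and m: "m \<in> pos u" "\<forall>y\<in>pos u. (m, y) \<in> fst u"
  shows "word_iso u (flatten two_order
    (\<lambda>i. if i = 0 then letter_word (snd u m) else (Restr (fst u) (pos u - {m}), snd u)))"
    (is "word_iso u (flatten two_order ?W)")
proof -
  define W where "W = ?W"
  define f where "f x = (if x = m then prod_encode (0, 0) else prod_encode (1, x))" for x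
  have W0: "pos (W 0) = {0}" "fst (W 0) = {(0, 0)}"
    by (simp_all add: W_def pos_letter_word) (simp add: letter_word_def)
  have W1: "pos (W (Suc 0)) = pos u - {m}" "fst (W (Suc 0)) = Restr (fst u) (pos u - {m})"
    by (simp_all add: W_def pos_Restr[OF v])
  have "\<forall>i\<in>Field two_order. valid_word (W i)"
    by (simp add: W_def Field_two_order valid_letter_word valid_word_Restr[OF v])
  then have "pos (flatten two_order W) = f ` pos u"
    using m(1) by (auto simp: pos_flatten Field_two_order W0 W1 image_iff f_def)
  moreover have "inj_on f (pos u)" by (simp add: inj_on_def f_def)
  moreover have "(i, j) \<in> fst u \<longleftrightarrow> (f i, f j) \<in> fst (flatten two_order W)"
    if ij: "i \<in> pos u" "j \<in> pos u" for i j
  proof -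
    have "antisym (fst u)" using v by (simp add: valid_word_def order_on_defs)
    then have "(x, m) \<in> fst u \<longleftrightarrow> x = m" if "x \<in> pos u" for x
      using m that by (auto dest: antisymD)
    then show ?thesis
      using ij m by (auto simp: flatten_rel Field_two_order two_order_def W0 W1 f_def)
  qed
  moreover have "snd (flatten two_order W) (f i) = snd u i" for i
    by (simp add: snd_flatten W_def letter_word_def f_def)
  ultimately show ?thesis
    unfolding word_iso_def bij_betw_def W_def by blast
qed

locale presented_ordinal_monoid =
  fixes \<pi> :: "'m oword \<Rightarrow> 'm" and one :: 'm and mult :: "'m \<Rightarrow> 'm \<Rightarrow> 'm"
    and omega :: "'m \<Rightarrow> 'm"
  assumes ordinal_monoid: "ordinal_monoid \<pi>"
    and presentation: "presentation_of \<pi> one mult omega"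
begin

lemma pi_word_iso: "valid_word u \<Longrightarrow> word_iso u v \<Longrightarrow> \<pi> u = \<pi> v"
  using ordinal_monoid valid_word_iso unfolding ordinal_monoid_def by blast

lemma pi_singleton:
  assumes "valid_word u" "pos u = {n}"
  shows "\<pi> u = snd u n"
proof -
  have "(THE n. pos u = {n}) = n" using assms(2) by auto
  then show ?thesis using ordinal_monoid assms unfolding ordinal_monoid_def by metis
qed

lemma pi_flatten:
  "Well_order R \<Longrightarrow> \<forall>i\<in>Field R. valid_word (W i) \<Longrightarrow> \<pi> (flatten R W) = \<pi> (R, \<lambda>i. \<pi> (W i))"
  using ordinal_monoid unfolding ordinal_monoid_def by blast

lemma pi_letter_word: "\<pi> (letter_word x) = x"
  using pi_singleton[OF valid_letter_word pos_letter_word] by (simp add: letter_word_def)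

lemma pi_empty: "valid_word u \<Longrightarrow> pos u = {} \<Longrightarrow> \<pi> u = one"
proof -
  assume u: "valid_word u" "pos u = {}"
  then have "fst u = {}" unfolding pos_def by (metis Restr_Field Sigma_empty1 inf_bot_right)
  then have "word_iso u empty_word"
    using u(2) by (intro word_iso_same_order) (simp_all add: empty_word_def)
  then show "\<pi> u = one"
    using pi_word_iso[OF u(1)] presentation by (simp add: presentation_of_def)
qed

lemma pi_two_order: "\<pi> (two_order, w) = mult (w 0) (w 1)"
proof -
  have "pos (two_word (w 0) (w 1)) = {0, 1}" by (simp add: pos_def fst_two_word Field_two_order)
  moreover have "snd (two_word (w 0) (w 1)) i = w i" if "i \<in> {0, 1}" for i
    using that by (auto simp: two_word_def)
  ultimately have "word_iso (two_word (w 0) (w 1)) (two_order, w)"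
    by (intro word_iso_same_order) (simp_all add: fst_two_word)
  moreover have "valid_word (two_word (w 0) (w 1))"
    by (simp add: valid_word_def fst_two_word Well_order_two_order)
  ultimately have "\<pi> (two_word (w 0) (w 1)) = \<pi> (two_order, w)" by (rule pi_word_iso[rotated])
  moreover have "mult (w 0) (w 1) = \<pi> (two_word (w 0) (w 1))"
    using presentation by (simp add: presentation_of_def)
  ultimately show ?thesis by simp
qed

lemma pi_flatten_two_order:
  assumes "valid_word (W 0)" "valid_word (W 1)"
  shows "\<pi> (flatten two_order W) = mult (\<pi> (W 0)) (\<pi> (W 1))"
  using pi_flatten[OF Well_order_two_order, of W] assms
  by (simp add: Field_two_order pi_two_order)

lemma pi_constant_word:
  assumes "valid_word u" "finite (pos u)" "\<forall>i\<in>pos u. snd u i = a"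
  shows "\<pi> u = mpow one mult a (card (pos u))"
  using assms
proof (induction "card (pos u)" arbitrary: u)
  case 0
  then show ?case by (simp add: pi_empty)
next
  case (Suc n)
  interpret wo_rel "fst u" using Suc.prems(1) by (simp add: wo_rel_def valid_word_def)
  let ?m = "minim (pos u)"
  have pos_Field: "pos u \<subseteq> Field (fst u)" by (simp add: pos_def)
  have ne: "pos u \<noteq> {}" using Suc.hyps(2) by (metis card.empty nat.distinct(1))
  have m: "?m \<in> pos u" "\<forall>y\<in>pos u. (?m, y) \<in> fst u"
    using minim_in[OF pos_Field ne] minim_least[OF pos_Field] by auto
  define v where "v = (Restr (fst u) (pos u - {?m}), snd u)"
  have v: "valid_word v" "pos v = pos u - {?m}"
    using valid_word_Restr[OF Suc.prems(1)] pos_Restr[OF Suc.prems(1)] by (auto simp: v_def)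
  have "card (pos v) = card (pos u) - 1" using v(2) m(1) Suc.prems(2) by simp
  then have "card (pos v) = n" using Suc.hyps(2) by linarith
  then have "\<pi> v = mpow one mult a n"
    using Suc.hyps(1) Suc.prems(2,3) v by (simp add: v_def)
  define W where "W = (\<lambda>i::nat. if i = 0 then letter_word (snd u ?m) else v)"
  have "word_iso u (flatten two_order W)"
    unfolding W_def v_def by (rule word_iso_split_first[OF Suc.prems(1) m])
  then have "\<pi> u = \<pi> (flatten two_order W)" by (rule pi_word_iso[OF Suc.prems(1)])
  also have "\<dots> = mult (\<pi> (W 0)) (\<pi> (W 1))"
    by (rule pi_flatten_two_order) (simp_all add: W_def valid_letter_word v(1))
  also have "\<dots> = mult a (\<pi> v)"
    using Suc.prems(3) m(1) by (simp add: W_def pi_letter_word)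
  also have "\<dots> = mpow one mult a (Suc n)" using \<open>\<pi> v = mpow one mult a n\<close> by simp
  finally show ?case unfolding Suc.hyps(2) .
qed

lemma mult_one_right: "mult a one = a"
proof -
  have "\<forall>i\<in>pos (letter_word a). snd (letter_word a) i = a" by (simp add: letter_word_def)
  then have "\<pi> (letter_word a) = mpow one mult a 1"
    using pi_constant_word[OF valid_letter_word] by (simp add: pos_letter_word)
  then show ?thesis by (simp add: pi_letter_word)
qed

lemma pi_plus_lang: "u \<in> plus_lang a \<Longrightarrow> \<pi> u = mpow one mult a (card (pos u))"
  by (simp add: plus_lang_def pi_constant_word)

lemma mpow_in_cl_sharp: "0 < n \<Longrightarrow> mpow one mult a n \<in> cl_sharp mult sharp {a}"
proof (induction n rule: nat_induct_non_zero)
  case 1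
  then show ?case by (simp add: mult_one_right cl_sharp.base)
next
  case (Suc n)
  then show ?case by (simp add: cl_sharp.base cl_sharp.mult)
qed

end

section \<open>Powers in a finite monoid\<close>

lemma funpow_eventually_periodic:
  fixes f :: "'a::finite \<Rightarrow> 'a"
  obtains i P where "0 < P" "\<And>n c. i \<le> n \<Longrightarrow> (f ^^ (n + c * P)) x = (f ^^ n) x"
proof -
  have "\<not> inj (\<lambda>n. (f ^^ n) x)"
    using finite_imageD[of "\<lambda>n. (f ^^ n) x" UNIV] by auto
  then obtain i j where ij: "i < j" "(f ^^ i) x = (f ^^ j) x"
    unfolding inj_def by (metis linorder_neqE_nat)
  have shift: "(f ^^ (n + (j - i))) x = (f ^^ n) x" if "i \<le> n" for n
  proof -
    have "n + (j - i) = (n - i) + j" "n = (n - i) + i" using that ij(1) by simp_all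
    then show ?thesis by (metis funpow_add comp_apply ij(2))
  qed
  have "(f ^^ (n + c * (j - i))) x = (f ^^ n) x" if "i \<le> n" for n c
  proof (induction c)
    case (Suc c)
    have "(f ^^ (n + Suc c * (j - i))) x = (f ^^ ((n + c * (j - i)) + (j - i))) x"
      by (simp add: add_ac)
    also have "\<dots> = (f ^^ (n + c * (j - i))) x" using shift that by simp
    finally show ?case using Suc.IH by simp
  qed simp
  then show thesis using that[of "j - i" i] ij(1) by simp
qed

lemma mpow_eq_funpow: "mpow one mult a n = (mult a ^^ n) one"
  by (induction n) simp_all

lemma fact_pow_eq_mpow_eventually:
  fixes one :: "'m::finite"
  obtains i where "\<And>k. i \<le> k \<Longrightarrow> fact_pow one mult a k = mpow one mult a k"
proof -
  obtain i P where P: "0 < P"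
    "\<And>n c. i \<le> n \<Longrightarrow> (mult a ^^ (n + c * P)) one = (mult a ^^ n) one"
    using funpow_eventually_periodic[where f = "mult a" and x = one] by metis
  have "fact_pow one mult a k = mpow one mult a k" if k: "i \<le> k" for k
  proof -
    have periodic_fact: "mpow one mult a (fact m + k) = mpow one mult a k" if "P \<le> m" for m
    proof -
      have "P dvd fact m" using P(1) that by (simp add: dvd_fact)
      then obtain c where "fact m = P * c" by (rule dvdE)
      then show ?thesis
        using P(2)[OF k, of c] by (simp add: mpow_eq_funpow add.commute mult.commute)
    qed
    show ?thesis unfolding fact_pow_def
    proof (rule the_equality)
      fix y assume "\<exists>N. \<forall>n\<ge>N. mpow one mult a (fact n + k) = y"
      then obtain N where "\<forall>n\<ge>N. mpow one mult a (fact n + k) = y" by blast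
      then show "y = mpow one mult a k" using periodic_fact[of "max N P"] by simp
    qed (use periodic_fact in blast)
  qed
  then show thesis by (rule that)
qed

theorem lemma5p7:
  fixes \<pi> :: "('m::{finite,order}) oword \<Rightarrow> 'm"
    and one :: 'm and mult :: "'m \<Rightarrow> 'm \<Rightarrow> 'm"
    and omega sharp :: "'m \<Rightarrow> 'm" and a :: 'm
  assumes "ordinal_monoid_with_merge \<pi> one mult omega sharp"
  shows "\<exists>\<rho>. fo_approximant_to \<pi> (plus_lang a) (cl_sharp mult sharp {a}) \<rho>"
proof -
  have "ordinal_monoid \<pi>" "presentation_of \<pi> one mult omega"
    and sharp_bound: "\<And>k. fact_pow one mult a k \<le> sharp a"
    using assms unfolding ordinal_monoid_with_merge_def ordered_ordinal_monoid_def by blast+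
  then interpret presented_ordinal_monoid \<pi> one mult omega
    by unfold_locales
  obtain i where i: "\<And>k. i \<le> k \<Longrightarrow> fact_pow one mult a k = mpow one mult a k"
    using fact_pow_eq_mpow_eventually[where one = one and mult = mult and a = a] by blast
  define g where "g c = (if c < i then mpow one mult a c else sharp a)" for c
  define \<rho> :: "'m oword \<Rightarrow> 'm" where "\<rho> u = g (min (card (pos u)) i)" for u
  have "\<pi> u \<le> \<rho> u \<and> \<rho> u \<in> cl_sharp mult sharp {a}" if u: "u \<in> plus_lang a" for u
  proof (cases "card (pos u) < i")
    case True
    then have "\<rho> u = mpow one mult a (card (pos u))" by (simp add: \<rho>_def g_def)
    moreover have "0 < card (pos u)" using u by (simp add: plus_lang_def card_gt_0_iff)
    ultimately show ?thesis by (simp add: pi_plus_lang[OF u] mpow_in_cl_sharp)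
  next
    case False
    then have "\<rho> u = sharp a" by (simp add: \<rho>_def g_def)
    moreover have "\<pi> u = fact_pow one mult a (card (pos u))"
      using False i pi_plus_lang[OF u] by simp
    ultimately show ?thesis using sharp_bound by (simp add: cl_sharp.base cl_sharp.sharp)
  qed
  moreover have "fo_definable_map (plus_lang a) \<rho>"
    by (rule fo_definable_map_min_card[OF fo_definable_plus_lang, where g = g and N = i])
      (simp_all add: plus_lang_def \<rho>_def)
  ultimately have "fo_approximant_to \<pi> (plus_lang a) (cl_sharp mult sharp {a}) \<rho>"
    by (simp add: fo_approximant_to_def fo_definable_plus_lang)
  then show ?thesis by blast
qed

end
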